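(* Let $h:\mathbb{R}\to\mathbb{R}$ satisfy $(h(x)-ax)(h(x)-bx)\le0$ for all $x\in\mathbb{R}$, where $b>a>0$, and let $N:\mathcal{L}_{2e+}^1\to\mathcal{L}_{2e+}^1$ be the static system $(Nu)(t)=h(u(t))$. Then $$\theta(N)\le\arccos\frac{2\sqrt{ab}}{a+b}.$$
   Context: $\mathcal{L}_2^1$ is the set of measurable $u:\mathbb{R}\to\mathbb{R}$ with $\|u\|_2^2=\int|u(t)|^2dt<\infty$, inner product $\langle u,v\rangle=\int u(t)v(t)\,dt$; $\mathcal{L}_{2+}=\{u\in\mathcal{L}_2:u(t)=0\ \text{for}\ t<0\}$; for $T\ge0$, $(\Gamma_Tu)(t)=u(t)$ for $t\le T$, $0$ for $t>T$; $\mathcal{L}_{2e+}=\{u:\Gamma_Tu\in\mathcal{L}_{2+}\ \forall T\ge0\}$. For a causal stable system $P$ (i.e. $\Gamma_TP=\Gamma_TP\Gamma_T$, $P$ maps $\mathcal{L}_{2+}$ to $\mathcal{L}_{2+}$ with finite gain $\sup_{0\ne u\in\mathcal{L}_{2+}}\|Pu\|_2/\|u\|_2$), the singular angle $\theta(P)\in[0,\pi]$ is given by $\cos\theta(P)=\inf\{\langle u,Pu\rangle/(\|u\|_2\|Pu\|_2):0\neq u\in\mathcal{L}_{2+},\ Pu\ne0\}$. *)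

theory Defs
  imports "HOL-Analysis.Analysis"
begin

definition L2 :: "(real \<Rightarrow> real) set" where
  "L2 = {u. u \<in> borel_measurable lebesgue \<and> integrable lebesgue (\<lambda>t. (u t)\<^sup>2)}"

definition l2_inner :: "(real \<Rightarrow> real) \<Rightarrow> (real \<Rightarrow> real) \<Rightarrow> real" where
  "l2_inner u v = integral\<^sup>L lebesgue (\<lambda>t. u t * v t)"

definition l2_norm :: "(real \<Rightarrow> real) \<Rightarrow> real" where
  "l2_norm u = sqrt (integral\<^sup>L lebesgue (\<lambda>t. (u t)\<^sup>2))"

definition L2plus :: "(real \<Rightarrow> real) set" where
  "L2plus = {u. u \<in> L2 \<and> (\<forall>t<0. u t = 0)}"

definition trunc :: "real \<Rightarrow> (real \<Rightarrow> real) \<Rightarrow> (real \<Rightarrow> real)" where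
  "trunc T u = (\<lambda>t. if t \<le> T then u t else 0)"

definition L2eplus :: "(real \<Rightarrow> real) set" where
  "L2eplus = {u. \<forall>T\<ge>0. trunc T u \<in> L2plus}"

definition singular_angle :: "((real \<Rightarrow> real) \<Rightarrow> (real \<Rightarrow> real)) \<Rightarrow> real" where
  "singular_angle P = arccos (Inf {l2_inner u (P u) / (l2_norm u * l2_norm (P u)) | u.
      u \<in> L2plus \<and> l2_norm u \<noteq> 0 \<and> l2_norm (P u) \<noteq> 0})"

end

theory Submission
  imports Defs
begin

text \<open>The sector condition says that pointwise \<open>h x\<close> lies between \<open>a x\<close> and \<open>b x\<close>, which
rearranges to \<open>h(x)\<^sup>2 + a b x\<^sup>2 \<le> (a + b) x h(x)\<close>. Integrating along a signal \<open>u\<close> gives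
\<open>\<parallel>Nu\<parallel>\<^sup>2 + a b \<parallel>u\<parallel>\<^sup>2 \<le> (a + b) \<langle>u, Nu\<rangle>\<close>, and by AM-GM the left side is at least
\<open>2 \<surd>(ab) \<parallel>u\<parallel> \<parallel>Nu\<parallel>\<close>. Hence every cosine in the definition of the singular angle is at
least \<open>2 \<surd>(ab) / (a + b)\<close>; the indicator of \<open>[0, 1]\<close> shows that the set of cosines is
nonempty and contains \<open>1\<close>, so its infimum lies in \<open>[-1, 1]\<close>, where \<open>arccos\<close> is antitone.\<close>

lemma sector_abs_le:
  fixes a b x y :: real
  assumes "0 \<le> a" "a \<le> b" "(y - a * x) * (y - b * x) \<le> 0"
  shows "\<bar>y\<bar> \<le> b * \<bar>x\<bar>"
proof -
  have between: "a * x \<le> y \<and> y \<le> b * x \<or> b * x \<le> y \<and> y \<le> a * x"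
    using assms(3) by (auto simp: mult_le_0_iff)
  show ?thesis
  proof (cases "0 \<le> x")
    case True
    then have "0 \<le> a * x" "a * x \<le> b * x"
      using assms(1,2) by (auto intro: mult_right_mono)
    with between have "\<bar>y\<bar> \<le> b * x" unfolding abs_le_iff by linarith
    with True show ?thesis by simp
  next
    case False
    then have "a * x \<le> 0" "b * x \<le> a * x"
      using assms(1,2) by (auto intro: mult_nonneg_nonpos mult_right_mono_neg)
    with between have "\<bar>y\<bar> \<le> - (b * x)" unfolding abs_le_iff by linarith
    with False show ?thesis by simp
  qed
qed

lemma L2plus_subset_L2eplus: "L2plus \<subseteq> L2eplus"
proof
  fix u assume u: "u \<in> L2plus"
  then have um: "u \<in> borel_measurable lebesgue" and ui: "integrable lebesgue (\<lambda>t. (u t)\<^sup>2)"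
    by (auto simp: L2plus_def L2_def)
  have "trunc T u \<in> L2plus" for T
  proof -
    have "{..T} \<in> sets lebesgue" by (intro sets_completionI_sets) simp
    moreover have "trunc T u = (\<lambda>t. indicator {..T} t * u t)"
      by (auto simp: trunc_def indicator_def fun_eq_iff)
    ultimately have m: "trunc T u \<in> borel_measurable lebesgue"
      using um by (simp add: borel_measurable_indicator borel_measurable_times)
    have "integrable lebesgue (\<lambda>t. (trunc T u t)\<^sup>2)"
      by (rule Bochner_Integration.integrable_bound[OF ui]) (use m in \<open>auto simp: trunc_def\<close>)
    then show ?thesis using m u by (auto simp: L2plus_def L2_def trunc_def)
  qed
  then show "u \<in> L2eplus" by (simp add: L2eplus_def)
qed

lemma L2eplus_borel_measurable:
  assumes "u \<in> L2eplus"
  shows "u \<in> borel_measurable lebesgue"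
proof (rule borel_measurable_LIMSEQ_real)
  show "trunc (real i) u \<in> borel_measurable lebesgue" for i
    using assms by (auto simp: L2eplus_def L2plus_def L2_def)
  show "(\<lambda>i. trunc (real i) u t) \<longlonglongrightarrow> u t" for t
  proof (rule tendsto_eventually)
    obtain n :: nat where "t \<le> real n" using real_arch_simple by blast
    then have "\<forall>i\<ge>n. trunc (real i) u t = u t" by (auto simp: trunc_def)
    then show "\<forall>\<^sub>F i in sequentially. trunc (real i) u t = u t"
      unfolding eventually_sequentially by blast
  qed
qed

lemma L2_dominated:
  assumes "u \<in> L2" "v \<in> borel_measurable lebesgue" "\<And>t. \<bar>v t\<bar> \<le> c * \<bar>u t\<bar>"
  shows "v \<in> L2"
proof -
  have "integrable lebesgue (\<lambda>t. c\<^sup>2 * (u t)\<^sup>2)"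
    using assms(1) by (simp add: L2_def)
  then have "integrable lebesgue (\<lambda>t. (v t)\<^sup>2)"
  proof (rule Bochner_Integration.integrable_bound)
    show "(\<lambda>t. (v t)\<^sup>2) \<in> borel_measurable lebesgue" using assms(2) by measurable
    have "\<bar>v t\<bar>\<^sup>2 \<le> (c * \<bar>u t\<bar>)\<^sup>2" for t
      using assms(3)[of t] by (intro power_mono) auto
    then show "AE t in lebesgue. norm ((v t)\<^sup>2) \<le> norm (c\<^sup>2 * (u t)\<^sup>2)"
      by (simp add: power_mult_distrib)
  qed
  then show ?thesis using assms(2) by (simp add: L2_def)
qed

lemma integrable_mult_L2:
  assumes "u \<in> L2" "v \<in> L2"
  shows "integrable lebesgue (\<lambda>t. u t * v t)"
proof -
  have "integrable lebesgue (\<lambda>t. (u t)\<^sup>2 + (v t)\<^sup>2)"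
    using assms by (simp add: L2_def)
  then show ?thesis
  proof (rule Bochner_Integration.integrable_bound)
    show "(\<lambda>t. u t * v t) \<in> borel_measurable lebesgue"
      using assms by (simp add: L2_def borel_measurable_times)
    have "\<bar>u t * v t\<bar> \<le> (u t)\<^sup>2 + (v t)\<^sup>2" for t
    proof -
      have "2 * (\<bar>u t\<bar> * \<bar>v t\<bar>) \<le> (u t)\<^sup>2 + (v t)\<^sup>2"
        using sum_squares_ge_zero[of "\<bar>u t\<bar> - \<bar>v t\<bar>" 0] by (simp add: power2_eq_square algebra_simps)
      then show ?thesis
        unfolding abs_mult using mult_nonneg_nonneg[of "\<bar>u t\<bar>" "\<bar>v t\<bar>"] by linarith
    qed
    then show "AE t in lebesgue. norm (u t * v t) \<le> norm ((u t)\<^sup>2 + (v t)\<^sup>2)"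
      by simp
  qed
qed

lemma sector_cos_lower_bound:
  fixes a b :: real and u v :: "real \<Rightarrow> real"
  assumes "0 < a" "a \<le> b" "u \<in> L2" "v \<in> L2"
    and sector: "\<And>t. (v t - a * u t) * (v t - b * u t) \<le> 0"
    and "l2_norm u \<noteq> 0" "l2_norm v \<noteq> 0"
  shows "2 * sqrt (a * b) / (a + b) \<le> l2_inner u v / (l2_norm u * l2_norm v)"
proof -
  define x y where "x = l2_norm u" and "y = l2_norm v"
  have "0 \<le> x" "0 \<le> y"
    by (simp_all add: x_def y_def l2_norm_def)
  with assms(6,7) have "0 < x" "0 < y"
    by (auto simp: x_def y_def less_le)
  have "y\<^sup>2 + a * b * x\<^sup>2 = integral\<^sup>L lebesgue (\<lambda>t. (v t)\<^sup>2 + a * b * (u t)\<^sup>2)"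
    using assms(3,4) by (simp add: x_def y_def l2_norm_def L2_def)
  also have "\<dots> \<le> integral\<^sup>L lebesgue (\<lambda>t. (a + b) * (u t * v t))"
  proof (rule integral_mono)
    show "(v t)\<^sup>2 + a * b * (u t)\<^sup>2 \<le> (a + b) * (u t * v t)" for t
      using sector[of t] by (simp add: power2_eq_square algebra_simps)
  qed (use assms(3,4) integrable_mult_L2 in \<open>auto simp: L2_def\<close>)
  also have "\<dots> = (a + b) * l2_inner u v"
    by (simp add: l2_inner_def)
  finally have quadratic: "y\<^sup>2 + a * b * x\<^sup>2 \<le> (a + b) * l2_inner u v" .
  have "2 * sqrt (a * b) * (x * y) \<le> y\<^sup>2 + a * b * x\<^sup>2"
    using sum_squares_ge_zero[of "sqrt (a * b) * x - y" 0] assms(1,2)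
    by (simp add: power2_eq_square algebra_simps)
  with quadratic \<open>0 < x\<close> \<open>0 < y\<close> assms(1,2) show ?thesis
    by (simp add: x_def [symmetric] y_def [symmetric] field_simps)
qed

lemma l2_norm_scaled_unit_indicator: "l2_norm (\<lambda>t. c * indicator {0..1::real} t) = \<bar>c\<bar>"
proof -
  have "(\<lambda>t. (c * indicator {0..1::real} t)\<^sup>2) = (\<lambda>t. c\<^sup>2 * indicator {0..1} t)"
    by (auto simp: indicator_def)
  then show ?thesis by (simp add: l2_norm_def)
qed

lemma l2_inner_scaled_unit_indicator:
  "l2_inner (indicator {0..1::real}) (\<lambda>t. c * indicator {0..1} t) = c"
proof -
  have "(\<lambda>t. indicator {0..1::real} t * (c * indicator {0..1} t)) = (\<lambda>t. c * indicator {0..1} t)"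
    by (auto simp: indicator_def)
  then show ?thesis by (simp add: l2_inner_def)
qed

lemma static_cos_unit_indicator:
  fixes h :: "real \<Rightarrow> real"
  assumes "h 0 = 0" "0 < h 1"
  shows "l2_inner (indicator {0..1}) (\<lambda>t. h (indicator {0..1} t))
      / (l2_norm (indicator {0..1}) * l2_norm (\<lambda>t. h (indicator {0..1::real} t))) = 1"
proof -
  have "(\<lambda>t. h (indicator {0..1::real} t)) = (\<lambda>t. h 1 * indicator {0..1} t)"
    using assms(1) by (auto simp: indicator_def)
  moreover have "l2_norm (indicator {0..1::real}) = 1"
    using l2_norm_scaled_unit_indicator[of 1] by simp
  ultimately show ?thesis
    using assms(2) by (simp add: l2_norm_scaled_unit_indicator l2_inner_scaled_unit_indicator)
qed

lemma unit_indicator_L2plus: "(indicator {0..1::real} :: real \<Rightarrow> real) \<in> L2plus"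
proof -
  have "{0..1::real} \<in> sets lebesgue" by (intro sets_completionI_sets) simp
  moreover have "(\<lambda>t. (indicator {0..1::real} t :: real)\<^sup>2) = indicator {0..1}"
    by (auto simp: indicator_def)
  ultimately show ?thesis
    by (auto simp: L2plus_def L2_def borel_measurable_indicator)
qed

lemma arccos_Inf_le:
  fixes S :: "real set"
  assumes "s \<in> S" "s \<le> 1" "-1 \<le> c" "\<And>x. x \<in> S \<Longrightarrow> c \<le> x"
  shows "arccos (Inf S) \<le> arccos c"
proof -
  have "bdd_below S" using assms(4) by (auto simp: bdd_below_def)
  then have "Inf S \<le> 1" using cInf_lower[OF assms(1)] assms(2) by linarith
  moreover have "c \<le> Inf S" using assms(1,4) by (intro cInf_greatest) auto
  ultimately show ?thesis using assms(3) by (intro arccos_le_arccos) auto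
qed

theorem proposition5:
  fixes h :: "real \<Rightarrow> real" and a b :: real
  assumes "0 < a" and "a < b"
    and "\<And>x. (h x - a * x) * (h x - b * x) \<le> 0"
    and "\<And>u. u \<in> L2eplus \<Longrightarrow> (\<lambda>t. h (u t)) \<in> L2eplus"
  shows "singular_angle (\<lambda>u t. h (u t)) \<le> arccos (2 * sqrt (a * b) / (a + b))"
proof -
  have h_bound: "\<bar>h x\<bar> \<le> b * \<bar>x\<bar>" for x
    using assms(1,2) by (intro sector_abs_le[of a b] assms(3)) auto
  have cos_bound: "2 * sqrt (a * b) / (a + b) \<le> l2_inner u (\<lambda>t. h (u t)) / (l2_norm u * l2_norm (\<lambda>t. h (u t)))"
    if "u \<in> L2plus" "l2_norm u \<noteq> 0" "l2_norm (\<lambda>t. h (u t)) \<noteq> 0" for u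
  proof -
    have "u \<in> L2" using that(1) by (simp add: L2plus_def)
    \<comment> \<open>\<open>h\<close> is not assumed measurable: measurability of \<open>h \<circ> u\<close> comes from \<open>N\<close> mapping into \<open>L2eplus\<close>.\<close>
    have "(\<lambda>t. h (u t)) \<in> L2eplus"
      using that(1) L2plus_subset_L2eplus by (intro assms(4)) blast
    then have "(\<lambda>t. h (u t)) \<in> L2"
      using L2_dominated[OF \<open>u \<in> L2\<close> L2eplus_borel_measurable h_bound] by blast
    with \<open>u \<in> L2\<close> that(2,3) assms(1,2) show ?thesis
      by (intro sector_cos_lower_bound[of a b] assms(3)) auto
  qed
  have "h 0 = 0" "0 < h 1"
    using assms(1,2) assms(3)[of 1] h_bound[of 0] by (auto simp: mult_le_0_iff)
  then have witness: "l2_inner (indicator {0..1}) (\<lambda>t. h (indicator {0..1} t))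
      / (l2_norm (indicator {0..1}) * l2_norm (\<lambda>t. h (indicator {0..1::real} t))) = 1"
    by (rule static_cos_unit_indicator)
  have "0 \<le> 2 * sqrt (a * b) / (a + b)" using assms(1,2) by simp
  then show ?thesis
    unfolding singular_angle_def
  proof (intro arccos_Inf_le[where s = 1])
    show "1 \<in> {l2_inner u (\<lambda>t. h (u t)) / (l2_norm u * l2_norm (\<lambda>t. h (u t))) | u.
        u \<in> L2plus \<and> l2_norm u \<noteq> 0 \<and> l2_norm (\<lambda>t. h (u t)) \<noteq> 0}"
      using unit_indicator_L2plus witness by (intro CollectI exI[of _ "indicator {0..1}"]) auto
  qed (use cos_bound in auto)
qed

end
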